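(* Fix finite simple graphs $H_1,\dots,H_\ell$ and let $t(g)=(t_{H_1}(g),\dots,t_{H_\ell}(g))$. Let $\tau_0$ lie in the interior of the phase space $\Gamma=\{t(g): g\text{ a graphon}\}\subset\mathbb R^\ell$, and suppose the constrained entropy $s_\tau=\max\{\mathcal S(g): t(g)=\tau\}$ is differentiable (as a function of $\tau$) at $\tau_0$. If $g_0$ is a graphon with $t(g_0)=\tau_0$ and $\mathcal S(g_0)=s_{\tau_0}$, then the set $g_0^{-1}(\{0,1\})=\{(x,y): g_0(x,y)\in\{0,1\}\}$ has Lebesgue measure zero.
   Context: A graphon is a symmetric measurable function $g:[0,1]^2\to[0,1]$. For a finite simple graph $H$ with vertex set $\{1,\dots,m\}$ and edge set $E(H)$, its homomorphism density in $g$ is $t_H(g)=\int_{[0,1]^m}\prod_{\{i,j\}\in E(H)}g(x_i,x_j)\,dx_1\cdots dx_m$. The Shannon entropy is $\mathcal S(g)=\frac12\int_{[0,1]^2}S(g(x,y))\,dx\,dy$ with $S(w)=-w\ln w-(1-w)\ln(1-w)$ (and $0\ln0=0$). The maximum defining $s_\tau$ is attained for every $\tau\in\Gamma$. *)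

theory Defs
  imports "HOL-Analysis.Analysis"
begin

definition unitI :: "real measure" where
  "unitI = restrict_space lborel {0..1}"

text \<open>A graphon: a measurable symmetric function from the unit square to [0,1].
  Only the values on the unit square matter.\<close>
definition graphon :: "(real \<Rightarrow> real \<Rightarrow> real) \<Rightarrow> bool" where
  "graphon g \<longleftrightarrow>
     (\<lambda>(x, y). g x y) \<in> borel_measurable (restrict_space borel ({0..1} \<times> {0..1}))
   \<and> (\<forall>x\<in>{0..1}. \<forall>y\<in>{0..1}. g x y = g y x)
   \<and> (\<forall>x\<in>{0..1}. \<forall>y\<in>{0..1}. 0 \<le> g x y \<and> g x y \<le> 1)"

text \<open>A finite simple graph on vertex set {1..m}: a pair (m, E) where each edge
  {i,j} is recorded once as the pair (i,j) with i < j.\<close>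
type_synonym sgraph = "nat \<times> (nat \<times> nat) set"

definition simple_graph :: "sgraph \<Rightarrow> bool" where
  "simple_graph H \<longleftrightarrow> (\<forall>(i, j) \<in> snd H. 1 \<le> i \<and> i < j \<and> j \<le> fst H)"

definition hom_density :: "sgraph \<Rightarrow> (real \<Rightarrow> real \<Rightarrow> real) \<Rightarrow> real" where
  "hom_density H g =
     integral\<^sup>L (PiM {1..fst H} (\<lambda>_. unitI)) (\<lambda>x. \<Prod>(i, j) \<in> snd H. g (x i) (x j))"

text \<open>Binary entropy function S(w), with 0 ln 0 = 0 (note 0 * ln 0 = 0 in HOL).\<close>
definition bin_ent :: "real \<Rightarrow> real" where
  "bin_ent w = - w * ln w - (1 - w) * ln (1 - w)"

definition graphon_entropy :: "(real \<Rightarrow> real \<Rightarrow> real) \<Rightarrow> real" where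
  "graphon_entropy g = 1/2 * integral\<^sup>L (unitI \<Otimes>\<^sub>M unitI) (\<lambda>(x, y). bin_ent (g x y))"

definition dens_vec :: "('l::finite \<Rightarrow> sgraph) \<Rightarrow> (real \<Rightarrow> real \<Rightarrow> real) \<Rightarrow> real ^ 'l" where
  "dens_vec Hs g = (\<chi> k. hom_density (Hs k) g)"

definition phase_space :: "('l::finite \<Rightarrow> sgraph) \<Rightarrow> (real ^ 'l) set" where
  "phase_space Hs = {dens_vec Hs g | g. graphon g}"

text \<open>Constrained entropy s_tau (the supremum is a maximum for tau in Gamma).\<close>
definition constr_entropy :: "('l::finite \<Rightarrow> sgraph) \<Rightarrow> real ^ 'l \<Rightarrow> real" where
  "constr_entropy Hs \<tau> = Sup {graphon_entropy g | g. graphon g \<and> dens_vec Hs g = \<tau>}"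

end

theory Submission
  imports Defs "HOL-Probability.Probability"
begin

(* Suppose the set A where the entropy maximiser g0
   takes the values 0 or 1 has positive measure m.  For small e > 0 let g_e be g0 with the
   values 0 and 1 replaced by e and 1 - e.  Then
     (a) g_e is uniformly e-close to g0, so by the counting lemma its density vector is
         within C*e of tau0, C being the total number of edges of the graphs H_k;
     (b) the entropy gain is exactly  S(e) * m / 2 >= - e ln e * m / 2;
     (c) differentiability of s at tau0 gives  s(tau) - s(tau0) <= L * |tau - tau0|  near tau0.
   Since s(t(g_e)) >= Ent(g_e) = s(tau0) + S(e) m / 2, we get S(e) m / 2 <= L C e, which
   fails for small e because S(e)/e -> infinity. *)

lemma space_unitI [simp]: "space unitI = {0..1}"
  by (simp add: unitI_def)

lemma prob_space_unitI: "prob_space unitI"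
  by (rule prob_spaceI) (simp add: unitI_def emeasure_restrict_space)

abbreviation unit_square :: "(real \<times> real) measure" where
  "unit_square \<equiv> unitI \<Otimes>\<^sub>M unitI"

lemma pair_prob_space_unitI: "pair_prob_space unitI unitI"
  by (simp add: pair_prob_space_def pair_sigma_finite_def prob_space_unitI prob_space_imp_sigma_finite)

lemma space_unit_square: "space unit_square = {0..1} \<times> {0..1}"
  by (simp add: space_pair_measure)

lemma unit_square_measurable_borel: "(\<lambda>p. p) \<in> measurable unit_square (borel :: (real \<times> real) measure)"
proof -
  have "(\<lambda>x. x) \<in> measurable unitI borel"
    unfolding unitI_def by (rule measurable_restrict_space1) simp
  then have "(\<lambda>p. (fst p, snd p)) \<in> measurable unit_square (borel \<Otimes>\<^sub>M borel)"
    by (intro measurable_Pair) (auto intro: measurable_compose)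
  then show ?thesis by (simp add: borel_prod)
qed

lemma emeasure_unit_square:
  assumes sub: "X \<subseteq> {0..1} \<times> {0..1}" and X: "X \<in> sets (borel :: (real \<times> real) measure)"
  shows "X \<in> sets unit_square" and "emeasure unit_square X = emeasure lborel X"
proof -
  interpret U: prob_space unitI by (rule prob_space_unitI)
  show XS: "X \<in> sets unit_square"
    using measurable_sets[OF unit_square_measurable_borel X] sub
    by (simp add: space_unit_square Int_absorb2)
  have cut_y: "indicator X (x, y) * indicator {0..1::real} y = (indicator X (x, y) :: ennreal)" for x y
    using sub by (auto simp: indicator_def)
  have cut_x: "(\<integral>\<^sup>+ y. indicator X (x, y) \<partial>lborel) * indicator {0..1::real} x
      = (\<integral>\<^sup>+ y. indicator X (x, y) \<partial>lborel)" for x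
  proof (cases "x \<in> {0..1}")
    case False
    then have "indicator X (x, y) = (0::ennreal)" for y using sub by (auto simp: indicator_def)
    then show ?thesis by simp
  qed simp
  have "emeasure unit_square X = (\<integral>\<^sup>+ x. \<integral>\<^sup>+ y. indicator X (x, y) \<partial>unitI \<partial>unitI)"
    by (rule U.emeasure_pair_measure[OF XS])
  also have "\<dots> = (\<integral>\<^sup>+ x. \<integral>\<^sup>+ y. indicator X (x, y) \<partial>lborel \<partial>lborel)"
    unfolding unitI_def by (simp add: nn_integral_restrict_space cut_y cut_x)
  also have "\<dots> = emeasure (lborel \<Otimes>\<^sub>M lborel) X"
    using X by (intro lborel.emeasure_pair_measure[symmetric]) (subst lborel_prod, simp)
  finally show "emeasure unit_square X = emeasure lborel X"
    by (simp add: lborel_prod)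
qed

lemma measure_unit_square_pos:
  assumes "X \<subseteq> {0..1} \<times> {0..1}" "X \<in> sets borel" "X \<notin> null_sets lebesgue"
  shows "0 < measure unit_square X"
proof -
  interpret U: pair_prob_space unitI unitI by (rule pair_prob_space_unitI)
  have "emeasure lborel X \<noteq> 0"
    using assms(2,3) null_sets_completionI by (auto simp: null_sets_def)
  then have "emeasure unit_square X \<noteq> 0"
    using emeasure_unit_square[OF assms(1,2)] by simp
  then show ?thesis
    using U.P.emeasure_eq_measure[of X] by (simp add: zero_less_measure_iff)
qed

definition zero_ext :: "(real \<Rightarrow> real \<Rightarrow> real) \<Rightarrow> real \<times> real \<Rightarrow> real" where
  "zero_ext g p = indicator ({0..1} \<times> {0..1}) p * (case p of (x, y) \<Rightarrow> g x y)"

lemma zero_ext_measurable: "graphon g \<Longrightarrow> zero_ext g \<in> borel_measurable borel"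
  unfolding graphon_def zero_ext_def
  by (subst (asm) borel_measurable_restrict_space_iff) (auto intro!: borel_closed closed_Times)

lemma graphon_comp_measurable:
  assumes "graphon g" and f: "f \<in> borel_measurable borel"
  shows "(\<lambda>(x, y). f (g x y)) \<in> borel_measurable unit_square"
proof -
  have "(\<lambda>p. f (zero_ext g p)) \<in> borel_measurable unit_square"
    using measurable_compose[OF unit_square_measurable_borel
            measurable_compose[OF zero_ext_measurable[OF assms(1)] f]] .
  then show ?thesis
    by (rule measurable_cong[THEN iffD1, rotated]) (auto simp: space_unit_square zero_ext_def)
qed

lemma graphon_coord_measurable:
  assumes "graphon g" "i \<in> I" "j \<in> I"
  shows "(\<lambda>x. g (x i) (x j)) \<in> borel_measurable (PiM I (\<lambda>_. unitI))"
proof -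
  have "(\<lambda>x. (x i, x j)) \<in> measurable (PiM I (\<lambda>_. unitI)) unit_square"
    using assms by (intro measurable_Pair) auto
  from measurable_compose[OF this graphon_comp_measurable[OF assms(1), of "\<lambda>x. x"]]
  show ?thesis by simp
qed

definition zero_one_set :: "(real \<Rightarrow> real \<Rightarrow> real) \<Rightarrow> (real \<times> real) set" where
  "zero_one_set g = {(x, y) \<in> {0..1} \<times> {0..1}. g x y \<in> {0, 1}}"

lemma zero_one_set_subset: "zero_one_set g \<subseteq> {0..1} \<times> {0..1}"
  by (auto simp: zero_one_set_def)

lemma zero_one_set_borel:
  assumes "graphon g"
  shows "zero_one_set g \<in> sets borel"
proof -
  have "zero_ext g -` {0, 1} \<inter> space borel \<in> sets borel"
    by (rule measurable_sets[OF zero_ext_measurable[OF assms]]) simp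
  then have "zero_ext g -` {0, 1} \<inter> ({0..1} \<times> {0..1}) \<in> sets borel"
    by (intro sets.Int) (auto intro!: borel_closed closed_Times)
  also have "zero_ext g -` {0, 1} \<inter> ({0..1} \<times> {0..1}) = zero_one_set g"
    by (auto simp: zero_one_set_def zero_ext_def)
  finally show ?thesis .
qed

text \<open>Products of numbers in [0,1] are 1-Lipschitz in each factor (telescoping).\<close>
lemma prod_diff_le_sum:
  fixes a b :: "'a \<Rightarrow> real"
  assumes "finite E" "\<forall>e\<in>E. 0 \<le> a e \<and> a e \<le> 1 \<and> 0 \<le> b e \<and> b e \<le> 1"
  shows "\<bar>prod a E - prod b E\<bar> \<le> (\<Sum>e\<in>E. \<bar>a e - b e\<bar>)"
  using assms
proof (induction E rule: finite_induct)
  case empty then show ?case by simp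
next
  case (insert x F)
  let ?P = "prod a F" and ?Q = "prod b F"
  have P: "0 \<le> ?P" "?P \<le> 1" using insert by (auto intro: prod_nonneg prod_le_1)
  have ab: "0 \<le> a x" "a x \<le> 1" "0 \<le> b x" "b x \<le> 1" using insert by auto
  have "a x * ?P - b x * ?Q = (a x - b x) * ?P + b x * (?P - ?Q)" by (simp add: algebra_simps)
  then have "\<bar>a x * ?P - b x * ?Q\<bar> \<le> \<bar>a x - b x\<bar> * \<bar>?P\<bar> + \<bar>b x\<bar> * \<bar>?P - ?Q\<bar>"
    by (metis abs_mult abs_triangle_ineq)
  also have "\<dots> \<le> \<bar>a x - b x\<bar> + \<bar>?P - ?Q\<bar>"
    using P ab by (intro add_mono) (auto intro: mult_left_le mult_left_le_one_le)
  finally show ?case using insert by simp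
qed

lemma finite_edges: "simple_graph H \<Longrightarrow> finite (snd H)"
  unfolding simple_graph_def
  by (rule finite_subset[of _ "{1..fst H} \<times> {1..fst H}"]) auto

lemma hom_density_lipschitz:
  fixes e :: real
  assumes H: "simple_graph H" and g: "graphon g" and g': "graphon g'"
    and close: "\<forall>x\<in>{0..1}. \<forall>y\<in>{0..1}. \<bar>g x y - g' x y\<bar> \<le> e"
  shows "\<bar>hom_density H g - hom_density H g'\<bar> \<le> card (snd H) * e"
proof -
  let ?M = "PiM {1..fst H} (\<lambda>_. unitI)"
  let ?F = "\<lambda>g x. \<Prod>(i, j) \<in> snd H. g (x i) (x j)"
  interpret P: prob_space ?M by (intro prob_space_PiM prob_space_unitI)
  have edge: "i \<in> {1..fst H} \<and> j \<in> {1..fst H}" if "(i, j) \<in> snd H" for i j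
    using H that unfolding simple_graph_def by auto
  have coord: "x i \<in> {0..1}" if "x \<in> space ?M" "i \<in> {1..fst H}" for x i
    using that by (auto simp: space_PiM)
  have bounded: "0 \<le> g (x i) (x j) \<and> g (x i) (x j) \<le> 1"
    if "graphon g" "x \<in> space ?M" "(i, j) \<in> snd H" for g x i j
    using that coord edge unfolding graphon_def by blast
  have integrable: "integrable ?M (?F g)" if g: "graphon g" for g
  proof (rule P.integrable_const_bound[where B=1])
    show "AE x in ?M. norm (?F g x) \<le> 1"
      using bounded[OF g]
      by (auto intro!: AE_I2 prod_le_1 prod_nonneg split: prod.splits simp: abs_prod)
    show "?F g \<in> borel_measurable ?M"
    proof (rule borel_measurable_prod)
      fix p assume "p \<in> snd H"
      then obtain i j where "p = (i, j)" "(i, j) \<in> snd H" by (cases p) auto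
      then show "(\<lambda>x. case p of (i, j) \<Rightarrow> g (x i) (x j)) \<in> borel_measurable ?M"
        using graphon_coord_measurable[OF g, of i "{1..fst H}" j] edge[of i j] by simp
    qed
  qed
  have pointwise: "\<bar>?F g x - ?F g' x\<bar> \<le> card (snd H) * e" if x: "x \<in> space ?M" for x
  proof -
    have "\<bar>?F g x - ?F g' x\<bar>
        \<le> (\<Sum>p\<in>snd H. \<bar>(case p of (i, j) \<Rightarrow> g (x i) (x j)) - (case p of (i, j) \<Rightarrow> g' (x i) (x j))\<bar>)"
      using bounded[OF g x] bounded[OF g' x] finite_edges[OF H] by (intro prod_diff_le_sum) auto
    also have "\<dots> \<le> (\<Sum>p\<in>snd H. e)"
      using close coord[OF x] edge by (intro sum_mono) (auto split: prod.splits)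
    finally show ?thesis by simp
  qed
  have "\<bar>hom_density H g - hom_density H g'\<bar> = \<bar>integral\<^sup>L ?M (\<lambda>x. ?F g x - ?F g' x)\<bar>"
    unfolding hom_density_def using integrable[OF g] integrable[OF g'] by simp
  also have "\<dots> \<le> integral\<^sup>L ?M (\<lambda>x. \<bar>?F g x - ?F g' x\<bar>)"
    by (rule integral_abs_bound)
  also have "\<dots> \<le> integral\<^sup>L ?M (\<lambda>x. card (snd H) * e)"
    using integrable[OF g] integrable[OF g'] pointwise by (intro integral_mono P.integrable_const) auto
  also have "\<dots> = card (snd H) * e"
    using P.prob_space by simp
  finally show ?thesis .
qed

definition edge_total :: "('l::finite \<Rightarrow> sgraph) \<Rightarrow> real" where
  "edge_total Hs = (\<Sum>k\<in>UNIV. real (card (snd (Hs k))))"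

lemma dens_vec_lipschitz:
  assumes "\<forall>k. simple_graph (Hs k)" "graphon g" "graphon g'"
    and close: "\<forall>x\<in>{0..1}. \<forall>y\<in>{0..1}. \<bar>g x y - g' x y\<bar> \<le> e"
  shows "norm (dens_vec Hs g - dens_vec Hs g') \<le> edge_total Hs * e"
proof -
  have "norm (dens_vec Hs g - dens_vec Hs g') \<le> (\<Sum>k\<in>UNIV. \<bar>(dens_vec Hs g - dens_vec Hs g') $ k\<bar>)"
    by (rule norm_le_l1_cart)
  also have "\<dots> \<le> (\<Sum>k\<in>UNIV. real (card (snd (Hs k))) * e)"
    using hom_density_lipschitz assms by (intro sum_mono) (simp add: dens_vec_def)
  also have "\<dots> = edge_total Hs * e"
    by (simp add: edge_total_def sum_distrib_right)
  finally show ?thesis .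
qed

lemma bin_ent_measurable: "bin_ent \<in> borel_measurable borel"
  unfolding bin_ent_def[abs_def] by measurable

lemma bin_ent_0 [simp]: "bin_ent 0 = 0" and bin_ent_1 [simp]: "bin_ent 1 = 0"
  by (simp_all add: bin_ent_def)

lemma bin_ent_sym: "bin_ent (1 - w) = bin_ent w"
  by (simp add: bin_ent_def algebra_simps)

lemma xlnx_bounds:
  fixes w :: real
  assumes "0 \<le> w" "w \<le> 1"
  shows "0 \<le> - w * ln w" and "- w * ln w \<le> 1"
proof -
  have "0 \<le> - w * ln w \<and> - w * ln w \<le> 1 - w"
  proof (cases "w = 0")
    case False
    then have w: "0 < w" using assms by auto
    have "ln (1/w) \<le> 1/w - 1" using w by (intro ln_le_minus_one) simp
    then have "w * (- ln w) \<le> w * (1/w - 1)" using w by (intro mult_left_mono) (auto simp: ln_div)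
    moreover have "ln w \<le> 0" using w assms by simp
    ultimately show ?thesis using w by (simp add: algebra_simps mult_nonneg_nonpos)
  qed (use assms in simp)
  then show "0 \<le> - w * ln w" "- w * ln w \<le> 1" using assms by auto
qed

lemma bin_ent_split: "bin_ent w = (- w * ln w) + (- (1 - w) * ln (1 - w))"
  by (simp add: bin_ent_def algebra_simps)

lemma bin_ent_bounds: "0 \<le> w \<Longrightarrow> w \<le> 1 \<Longrightarrow> 0 \<le> bin_ent w \<and> bin_ent w \<le> 2"
  using xlnx_bounds[of w] xlnx_bounds[of "1 - w"] by (simp add: bin_ent_split)

text \<open>S(e) grows faster than any linear function near 0: for each K there are arbitrarily
  small e with K * e < S(e), since S(e) \<ge> - e ln e.\<close>
lemma bin_ent_superlinear:
  fixes K \<delta> :: real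
  assumes "0 < \<delta>"
  obtains e where "0 < e" "e \<le> 1/2" "e \<le> \<delta>" "K * e < bin_ent e"
proof
  define e where "e = min (1/2) (min \<delta> (exp (- (\<bar>K\<bar> + 1))))"
  show e: "0 < e" "e \<le> 1/2" "e \<le> \<delta>"
    using assms by (auto simp: e_def)
  have "e \<le> exp (- (\<bar>K\<bar> + 1))" by (simp add: e_def)
  then have "ln e \<le> ln (exp (- (\<bar>K\<bar> + 1)))"
    using e by (subst ln_le_cancel_iff) auto
  then have "ln e \<le> - (\<bar>K\<bar> + 1)" by simp
  have "K * e \<le> \<bar>K\<bar> * e"
    using e by (intro mult_right_mono) auto
  also have "\<dots> < e * (\<bar>K\<bar> + 1)"
    using e by (simp add: algebra_simps)
  also have "\<dots> \<le> e * - ln e"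
    using e \<open>ln e \<le> - (\<bar>K\<bar> + 1)\<close> by (intro mult_left_mono) auto
  also have "\<dots> \<le> bin_ent e"
    using xlnx_bounds[of "1 - e"] e by (simp add: bin_ent_split)
  finally show "K * e < bin_ent e" .
qed

lemma entropy_integrable:
  assumes "graphon g"
  shows "integrable unit_square (\<lambda>(x, y). bin_ent (g x y))"
proof -
  interpret U: pair_prob_space unitI unitI by (rule pair_prob_space_unitI)
  show ?thesis
  proof (rule U.integrable_const_bound[where B=2])
    show "AE p in unit_square. norm ((\<lambda>(x, y). bin_ent (g x y)) p) \<le> 2"
      using assms bin_ent_bounds unfolding graphon_def
      by (intro AE_I2) (auto simp: space_unit_square)
  qed (rule graphon_comp_measurable[OF assms bin_ent_measurable])
qed

text \<open>Entropies are bounded, so every graphon's entropy is at most the constrained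
  entropy at its own density vector.\<close>
lemma entropy_le_one:
  assumes "graphon g"
  shows "graphon_entropy g \<le> 1"
proof -
  interpret U: pair_prob_space unitI unitI by (rule pair_prob_space_unitI)
  have "integral\<^sup>L unit_square (\<lambda>(x, y). bin_ent (g x y)) \<le> integral\<^sup>L unit_square (\<lambda>_. 2)"
    using assms bin_ent_bounds unfolding graphon_def
    by (intro integral_mono entropy_integrable[OF assms]) (auto simp: space_unit_square)
  then show ?thesis
    using U.prob_space by (simp add: graphon_entropy_def)
qed

lemma entropy_le_constr_entropy:
  assumes "graphon g"
  shows "graphon_entropy g \<le> constr_entropy Hs (dens_vec Hs g)"
  unfolding constr_entropy_def
  by (rule cSup_upper) (use assms entropy_le_one in \<open>auto intro!: bdd_aboveI[where M=1]\<close>)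

definition lift_extremes :: "real \<Rightarrow> (real \<Rightarrow> real \<Rightarrow> real) \<Rightarrow> real \<Rightarrow> real \<Rightarrow> real" where
  "lift_extremes e g x y = (if g x y = 0 then e else if g x y = 1 then 1 - e else g x y)"

lemma lift_extremes_graphon:
  assumes g: "graphon g" and e: "0 \<le> e" "e \<le> 1"
  shows "graphon (lift_extremes e g)"
proof -
  have "(\<lambda>w::real. if w = 0 then e else if w = 1 then 1 - e else w) \<in> borel_measurable borel"
    by measurable
  then have "(\<lambda>(x, y). lift_extremes e g x y) \<in> borel_measurable (restrict_space borel ({0..1} \<times> {0..1}))"
    using g unfolding graphon_def lift_extremes_def case_prod_unfold
    by (auto intro: measurable_compose)
  then show ?thesis using g e unfolding graphon_def lift_extremes_def by auto
qed

lemma lift_extremes_close: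
  "0 \<le> e \<Longrightarrow> \<forall>x\<in>{0..1}. \<forall>y\<in>{0..1}. \<bar>lift_extremes e g x y - g x y\<bar> \<le> e"
  by (auto simp: lift_extremes_def)

text \<open>The entropy gain of the perturbation is S(e) times half the measure of the
  zero-one set, because S(0) = S(1) = 0 and S(e) = S(1 - e).\<close>
lemma lift_extremes_entropy:
  assumes g: "graphon g"
  shows "graphon_entropy (lift_extremes e g)
    = graphon_entropy g + 1/2 * (bin_ent e * measure unit_square (zero_one_set g))"
proof -
  interpret U: pair_prob_space unitI unitI by (rule pair_prob_space_unitI)
  let ?A = "zero_one_set g"
  have A: "?A \<in> sets unit_square"
    by (rule emeasure_unit_square(1)[OF zero_one_set_subset zero_one_set_borel[OF g]])
  have "integral\<^sup>L unit_square (\<lambda>(x, y). bin_ent (lift_extremes e g x y))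
      = integral\<^sup>L unit_square (\<lambda>p. (\<lambda>(x, y). bin_ent (g x y)) p + bin_ent e * indicator ?A p)"
    by (intro Bochner_Integration.integral_cong)
       (auto simp: lift_extremes_def zero_one_set_def bin_ent_sym indicator_def
               space_unit_square split: if_splits)
  also have "\<dots> = integral\<^sup>L unit_square (\<lambda>(x, y). bin_ent (g x y)) + bin_ent e * measure unit_square ?A"
    using A entropy_integrable[OF g] U.P.emeasure_finite
    by (subst Bochner_Integration.integral_add) (auto simp: less_top[symmetric])
  finally show ?thesis
    unfolding graphon_entropy_def by (simp add: algebra_simps)
qed

text \<open>A real function differentiable at x satisfies a Lipschitz bound relative to x
  on a neighbourhood of x; this is all that is used of differentiability of s.\<close>
lemma differentiable_local_lipschitz:
  fixes f :: "'a::real_normed_vector \<Rightarrow> real"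
  assumes "f differentiable (at x)"
  obtains L d where "0 < L" "0 < d" "\<And>y. norm (y - x) < d \<Longrightarrow> \<bar>f y - f x\<bar> \<le> L * norm (y - x)"
proof -
  obtain D where D: "(f has_derivative D) (at x)"
    using assms unfolding differentiable_def by blast
  obtain K where K: "0 < K" "\<And>v. norm (D v) \<le> norm v * K"
    using bounded_linear.pos_bounded[OF has_derivative_bounded_linear[OF D]] by blast
  obtain d where d: "0 < d" "\<And>y. norm (y - x) < d \<Longrightarrow> norm (f y - f x - D (y - x)) \<le> 1 * norm (y - x)"
    using D unfolding has_derivative_at_alt by (meson zero_less_one)
  have "\<bar>f y - f x\<bar> \<le> (1 + K) * norm (y - x)" if "norm (y - x) < d" for y
    using d(2)[OF that] K(2)[of "y - x"] by (simp add: algebra_simps)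
  with K d show ?thesis using that[of "1 + K" d] by simp
qed

theorem theorem3p7:
  fixes Hs :: "'l::finite \<Rightarrow> sgraph"
    and \<tau>0 :: "real ^ 'l"
    and g0 :: "real \<Rightarrow> real \<Rightarrow> real"
  assumes "\<forall>k. simple_graph (Hs k)"
    and "\<tau>0 \<in> interior (phase_space Hs)"
    and "constr_entropy Hs differentiable (at \<tau>0)"
    and "graphon g0"
    and "dens_vec Hs g0 = \<tau>0"
    and "graphon_entropy g0 = constr_entropy Hs \<tau>0"
  shows "{(x, y) \<in> {0..1::real} \<times> {0..1::real}. g0 x y \<in> {0, 1}} \<in> null_sets lebesgue"
proof (rule ccontr)
  let ?s = "constr_entropy Hs" and ?C = "edge_total Hs"
  define m where "m = measure unit_square (zero_one_set g0)"
  assume "\<not> ?thesis"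
  then have m: "0 < m"
    using measure_unit_square_pos[OF zero_one_set_subset zero_one_set_borel[OF assms(4)]]
    unfolding m_def zero_one_set_def by simp
  obtain L d where L: "0 < L" "0 < d" "\<And>\<tau>. norm (\<tau> - \<tau>0) < d \<Longrightarrow> \<bar>?s \<tau> - ?s \<tau>0\<bar> \<le> L * norm (\<tau> - \<tau>0)"
    using differentiable_local_lipschitz[OF assms(3)] by blast
  have C: "0 \<le> ?C" by (simp add: edge_total_def sum_nonneg)
  \<comment> \<open>choose e so small that the entropy gain beats the linear loss L * C * e\<close>
  obtain e where e: "0 < e" "e \<le> 1/2" "e \<le> d / (?C + 1)" "(2 * L * ?C / m) * e < bin_ent e"
    using bin_ent_superlinear[where \<delta> = "d / (?C + 1)" and K = "2 * L * ?C / m"] L C by auto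
  define g where "g = lift_extremes e g0"
  have g: "graphon g" using lift_extremes_graphon[OF assms(4)] e by (simp add: g_def)
  have near: "norm (dens_vec Hs g - \<tau>0) \<le> ?C * e"
    using dens_vec_lipschitz[OF assms(1) g assms(4)] lift_extremes_close e assms(5)
    by (simp add: g_def)
  have "?C * e < d" using e C by (simp add: field_simps)
  then have "?s (dens_vec Hs g) - ?s \<tau>0 \<le> L * norm (dens_vec Hs g - \<tau>0)"
    using near L(3)[of "dens_vec Hs g"] by simp
  also have "\<dots> \<le> L * (?C * e)"
    using near L by (simp add: mult_left_mono)
  finally have upper: "?s (dens_vec Hs g) - ?s \<tau>0 \<le> L * (?C * e)" .
  have lower: "?s \<tau>0 + 1/2 * (bin_ent e * m) \<le> ?s (dens_vec Hs g)"
    using entropy_le_constr_entropy[OF g, of Hs] lift_extremes_entropy[OF assms(4), of e] assms(6)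
    by (simp add: g_def m_def)
  have "L * (?C * e) < 1/2 * (bin_ent e * m)"
    using e(4) m by (simp add: field_simps)
  with upper lower show False by linarith
qed

end
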